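(* Let $k \subseteq K$ be fields and $d \geqslant 1$. If $K$ is closed at level $d$ (over $k$), then $K$ is perfect and solvably closed, i.e. $K$ has no nontrivial finite solvable (in particular, no nontrivial finite Galois extension with solvable Galois group) and no nontrivial purely inseparable extensions.
   Context: For fields $k \subseteq K$ and a finite-dimensional $K$-algebra $A$, $A$ descends to an intermediate field $k \subseteq K_0 \subseteq K$ if there is a $K_0$-algebra $A_0$ with $A \simeq A_0 \otimes_{K_0} K$; $\operatorname{ed}_k(A/K)$ is the minimum of $\operatorname{trdeg}_k(K_0)$ over such $K_0$. For a finite field extension $L/K$, $\operatorname{lev}_k(L/K)$ is the smallest $d \geq 0$ such that there is a tower $K = K_0 \subseteq \dots \subseteq K_m$ of finite field extensions with $\operatorname{ed}_k(K_i/K_{i-1}) \leq d$ for all $i$ and $L$ embedding into $K_m$ over $K$. The level $d$ closure $K^{(d)}$ of $K$ in an algebraic closure $\overline{K}$ is the compositum of all intermediate fields $K \subseteq L \subseteq \overline{K}$ with $[L:K]<\infty$ and $\operatorname{lev}_k(L/K) \leq d$; $K$ is closed at level $d$ if $K = K^{(d)}$. A finite extension $L/K$ is called solvable if $L$ embeds over $K$ into the top of a tower $K=K_0\subseteq\dots\subseteq K_m$ with each $K_i=K_{i-1}(\lambda_i)$, $\lambda_i$ a root of a polynomial $x^{n_i}-a_i$ or $x^{n_i}-x-a_i$ with $a_i\in K_{i-1}$; $K$ is solvably closed if it has no nontrivial solvable extensions. *)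

theory Defs
  imports "HOL-Algebra.Algebraic_Closure" "HOL-Algebra.Generated_Fields" "HOL-Library.Extended_Nat" "HOL-Computational_Algebra.Primes"
begin

text \<open>All fields live inside a fixed ambient field Omega (an algebraic closure of K).
  Subfields are subsets of its carrier.\<close>

definition fin_ext :: "('a, 'b) ring_scheme \<Rightarrow> 'a set \<Rightarrow> 'a set \<Rightarrow> bool" where
  "fin_ext \<Omega> F L \<longleftrightarrow> subfield F \<Omega> \<and> subfield L \<Omega> \<and> F \<subseteq> L \<and> ring.finite_dimension \<Omega> F L"

text \<open>Algebraic independence over k of a finite set S: no nontrivial k-linear relation
  among distinct monomials in the elements of S (monomials are given by exponent functions
  supported in S).\<close>
definition alg_indep :: "('a, 'b) ring_scheme \<Rightarrow> 'a set \<Rightarrow> 'a set \<Rightarrow> bool" where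
  "alg_indep \<Omega> k S \<longleftrightarrow> finite S \<and> S \<subseteq> carrier \<Omega> \<and>
     (\<forall>(E :: ('a \<Rightarrow> nat) set) c. finite E \<and> (\<forall>e\<in>E. \<forall>x. x \<notin> S \<longrightarrow> e x = 0) \<and> c \<in> E \<rightarrow> k \<and>
        finsum \<Omega> (\<lambda>e. c e \<otimes>\<^bsub>\<Omega>\<^esub> finprod \<Omega> (\<lambda>s. s [^]\<^bsub>\<Omega>\<^esub> (e s)) S) E = \<zero>\<^bsub>\<Omega>\<^esub>
        \<longrightarrow> (\<forall>e\<in>E. c e = \<zero>\<^bsub>\<Omega>\<^esub>))"

definition trdeg :: "('a, 'b) ring_scheme \<Rightarrow> 'a set \<Rightarrow> 'a set \<Rightarrow> enat" where
  "trdeg \<Omega> k F = (SUP S \<in> {S. S \<subseteq> F \<and> alg_indep \<Omega> k S}. enat (card S))"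

text \<open>The finite extension L of F descends to the intermediate field K0: there is a
  K0-algebra A0 (realised as a unital K0-subalgebra B of L) such that the natural map
  A0 (tensor over K0) F \<rightarrow> L is an isomorphism, i.e. a K0-basis of B is an F-basis of L.\<close>
definition descends :: "('a, 'b) ring_scheme \<Rightarrow> 'a set \<Rightarrow> 'a set \<Rightarrow> 'a set \<Rightarrow> bool" where
  "descends \<Omega> F L K0 \<longleftrightarrow> (\<exists>B bs. B \<subseteq> L \<and> \<one>\<^bsub>\<Omega>\<^esub> \<in> B \<and>
      (\<forall>x\<in>B. \<forall>y\<in>B. x \<oplus>\<^bsub>\<Omega>\<^esub> y \<in> B \<and> x \<otimes>\<^bsub>\<Omega>\<^esub> y \<in> B) \<and>
      (\<forall>a\<in>K0. \<forall>x\<in>B. a \<otimes>\<^bsub>\<Omega>\<^esub> x \<in> B) \<and>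
      set bs \<subseteq> B \<and> ring.independent \<Omega> K0 bs \<and> ring.Span \<Omega> K0 bs = B \<and>
      ring.independent \<Omega> F bs \<and> ring.Span \<Omega> F bs = L)"

definition ed :: "('a, 'b) ring_scheme \<Rightarrow> 'a set \<Rightarrow> 'a set \<Rightarrow> 'a set \<Rightarrow> enat" where
  "ed \<Omega> k F L = (INF K0 \<in> {K0. subfield K0 \<Omega> \<and> k \<subseteq> K0 \<and> K0 \<subseteq> F \<and> descends \<Omega> F L K0}.
                    trdeg \<Omega> k K0)"

definition embeds_over :: "('a, 'b) ring_scheme \<Rightarrow> 'a set \<Rightarrow> 'a set \<Rightarrow> 'a set \<Rightarrow> bool" where
  "embeds_over \<Omega> K L M \<longleftrightarrow> (\<exists>\<sigma>. \<sigma> \<in> ring_hom (\<Omega>\<lparr>carrier := L\<rparr>) \<Omega> \<and> (\<forall>x\<in>K. \<sigma> x = x) \<and> \<sigma> ` L \<subseteq> M)"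

text \<open>Level lev_k(L/K) (infinite if no tower exists).\<close>
definition lev :: "('a, 'b) ring_scheme \<Rightarrow> 'a set \<Rightarrow> 'a set \<Rightarrow> 'a set \<Rightarrow> enat" where
  "lev \<Omega> k K L = Inf {enat d | d. \<exists>(m::nat) (Ks :: nat \<Rightarrow> 'a set). Ks 0 = K \<and>
      (\<forall>i\<in>{1..m}. fin_ext \<Omega> (Ks (i - 1)) (Ks i) \<and> ed \<Omega> k (Ks (i - 1)) (Ks i) \<le> enat d) \<and>
      embeds_over \<Omega> K L (Ks m)}"

definition level_closure :: "('a, 'b) ring_scheme \<Rightarrow> 'a set \<Rightarrow> 'a set \<Rightarrow> nat \<Rightarrow> 'a set" where
  "level_closure \<Omega> k K d = generate_field \<Omega> (\<Union>{L. fin_ext \<Omega> K L \<and> lev \<Omega> k K L \<le> enat d})"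

definition closed_at_level :: "('a, 'b) ring_scheme \<Rightarrow> 'a set \<Rightarrow> 'a set \<Rightarrow> nat \<Rightarrow> bool" where
  "closed_at_level \<Omega> k K d \<longleftrightarrow> K = level_closure \<Omega> k K d"

text \<open>Solvable finite extension (radical / Artin-Schreier type towers).\<close>
definition solvable_ext :: "('a, 'b) ring_scheme \<Rightarrow> 'a set \<Rightarrow> 'a set \<Rightarrow> bool" where
  "solvable_ext \<Omega> K L \<longleftrightarrow> (\<exists>(m::nat) (Ks :: nat \<Rightarrow> 'a set) lam a (n :: nat \<Rightarrow> nat). Ks 0 = K \<and>
      (\<forall>i\<in>{1..m}. lam i \<in> carrier \<Omega> \<and> a i \<in> Ks (i - 1) \<and>
         Ks i = generate_field \<Omega> (insert (lam i) (Ks (i - 1))) \<and>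
         ((n i \<ge> 1 \<and> lam i [^]\<^bsub>\<Omega>\<^esub> n i \<ominus>\<^bsub>\<Omega>\<^esub> a i = \<zero>\<^bsub>\<Omega>\<^esub>) \<or>
          (n i \<ge> 2 \<and> lam i [^]\<^bsub>\<Omega>\<^esub> n i \<ominus>\<^bsub>\<Omega>\<^esub> lam i \<ominus>\<^bsub>\<Omega>\<^esub> a i = \<zero>\<^bsub>\<Omega>\<^esub>))) \<and>
      embeds_over \<Omega> K L (Ks m))"

definition solvably_closed :: "('a, 'b) ring_scheme \<Rightarrow> 'a set \<Rightarrow> bool" where
  "solvably_closed \<Omega> K \<longleftrightarrow> (\<forall>L. fin_ext \<Omega> K L \<and> solvable_ext \<Omega> K L \<longrightarrow> L = K)"

definition perfect :: "('a, 'b) ring_scheme \<Rightarrow> 'a set \<Rightarrow> bool" where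
  "perfect \<Omega> K \<longleftrightarrow> (\<forall>p::nat. Factorial_Ring.prime p \<and> add_pow \<Omega> p \<one>\<^bsub>\<Omega>\<^esub> = \<zero>\<^bsub>\<Omega>\<^esub> \<longrightarrow>
                       (\<forall>x\<in>K. \<exists>y\<in>K. y [^]\<^bsub>\<Omega>\<^esub> p = x))"

end

theory Submission
  imports Defs
begin

(*
  Let K_i = K_(i-1)(lam) be a step of a radical or Artin-Schreier tower over K, with lam a root
  of X^n - a or X^n - X - a for some a in K_(i-1). The roots of the minimal polynomial of lam
  over K_(i-1) are roots of its minimal polynomial over k(a), hence algebraic over k(a); in an
  algebraically closed field its coefficients therefore lie in the subfield K0 of K_(i-1) of
  elements algebraic over k(a). So the step descends to K0, via the power basis of lam. Any two
  elements algebraic over k(a) satisfy a nontrivial polynomial relation over k, so K0 has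
  transcendence degree at most 1 over k. Hence every solvable extension of K has level at most
  1 <= d and lies in the level d closure, which is K. Perfectness follows because adjoining a
  p-th root is a one-step solvable extension.
*)

context ring
begin

lemma subring_nat_pow_closed:
  assumes "subring S R" "x \<in> S"
  shows "x [^] (i::nat) \<in> S"
  by (induction i) (use subringE(3,6)[OF assms(1)] assms(2) in auto)

lemma subring_finsum_closed:
  assumes "subring S R" "finite I" "\<And>i. i \<in> I \<Longrightarrow> f i \<in> S"
  shows "finsum R f I \<in> S"
  using assms(2,3)
proof (induction I rule: finite_induct)
  case empty
  then show ?case using subringE(2)[OF assms(1)] by simp
next
  case (insert i I)
  have "finsum R f (insert i I) = f i \<oplus> finsum R f I"
    by (rule finsum_insert) (use insert subringE(1)[OF assms(1)] in auto)
  then show ?case using insert subringE(7)[OF assms(1)] by auto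
qed

lemma finsum_cartesian_product:
  fixes f :: "'c \<times> 'd \<Rightarrow> 'a"
  assumes "finite A" "finite B" "\<And>p. f p \<in> carrier R"
  shows "finsum R f (A \<times> B) = (\<Oplus>a\<in>A. \<Oplus>b\<in>B. f (a, b))"
  using assms(1)
proof (induction A rule: finite_induct)
  case empty
  then show ?case by simp
next
  case (insert a A)
  have "insert a A \<times> B = Pair a ` B \<union> A \<times> B" "Pair a ` B \<inter> A \<times> B = {}" using insert by auto
  then have "finsum R f (insert a A \<times> B) = finsum R f (Pair a ` B) \<oplus> finsum R f (A \<times> B)"
    using finsum_Un_disjoint[of "Pair a ` B" "A \<times> B" f] assms insert by auto
  also have "finsum R f (Pair a ` B) = (\<Oplus>b\<in>B. f (a, b))"
    by (subst finsum_reindex) (auto simp: assms inj_on_def)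
  also have "(\<Oplus>b\<in>B. f (a, b)) \<oplus> finsum R f (A \<times> B) = (\<Oplus>a\<in>insert a A. \<Oplus>b\<in>B. f (a, b))"
    using insert by (subst finsum_insert) (auto simp: assms)
  finally show ?case .
qed

lemma finsum_swap:
  fixes f :: "'c \<Rightarrow> 'd \<Rightarrow> 'a"
  assumes "finite A" "finite B" "\<And>a b. f a b \<in> carrier R"
  shows "(\<Oplus>a\<in>A. \<Oplus>b\<in>B. f a b) = (\<Oplus>b\<in>B. \<Oplus>a\<in>A. f a b)"
proof -
  have "(\<Oplus>a\<in>A. \<Oplus>b\<in>B. f a b) = finsum R (\<lambda>p. f (fst p) (snd p)) (A \<times> B)"
    using finsum_cartesian_product[of A B "\<lambda>p. f (fst p) (snd p)"] assms by simp
  also have "\<dots> = finsum R (\<lambda>p. f (fst p) (snd p)) (prod.swap ` (B \<times> A))"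
    by (simp add: product_swap)
  also have "\<dots> = finsum R (\<lambda>p. f (snd p) (fst p)) (B \<times> A)"
    by (subst finsum_reindex) (auto simp: assms)
  also have "\<dots> = (\<Oplus>b\<in>B. \<Oplus>a\<in>A. f a b)"
    using finsum_cartesian_product[of B A "\<lambda>p. f (snd p) (fst p)"] assms by simp
  finally show ?thesis .
qed

lemma finsum_lessThan_eq_if_zero_above:
  fixes f :: "nat \<Rightarrow> 'a"
  assumes "N \<le> n" "\<And>i. N \<le> i \<Longrightarrow> i < n \<Longrightarrow> f i = \<zero>" "\<And>i. f i \<in> carrier R"
  shows "(\<Oplus>i\<in>{..<n}. f i) = (\<Oplus>i\<in>{..<N}. f i)"
  using assms(1,2)
proof (induction n rule: dec_induct)
  case base
  then show ?case by simp
next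
  case (step n)
  have "(\<Oplus>i\<in>{..<Suc n}. f i) = f n \<oplus> (\<Oplus>i\<in>{..<n}. f i)"
    unfolding lessThan_Suc by (rule finsum_insert) (use assms(3) in auto)
  then show ?case using step assms(3) by simp
qed

lemma eval_rev_map_eq_finsum:
  assumes "\<And>j. j < n \<Longrightarrow> f j \<in> carrier R" "y \<in> carrier R"
  shows "eval (rev (map f [0..<n])) y = (\<Oplus>j\<in>{..<n}. f j \<otimes> y [^] j)"
  using assms(1)
proof (induction n)
  case 0
  then show ?case by simp
next
  case (Suc n)
  have "eval (rev (map f [0..<Suc n])) y = f n \<otimes> y [^] n \<oplus> eval (rev (map f [0..<n])) y"
    by simp
  also have "\<dots> = f n \<otimes> y [^] n \<oplus> (\<Oplus>j\<in>{..<n}. f j \<otimes> y [^] j)"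
    using Suc by simp
  also have "\<dots> = (\<Oplus>j\<in>insert n {..<n}. f j \<otimes> y [^] j)"
    by (rule finsum_insert[symmetric]) (use Suc.prems assms(2) in auto)
  finally show ?case by (simp add: lessThan_Suc)
qed

lemma eval_eq_finsum_coeff:
  assumes "set p \<subseteq> carrier R" "y \<in> carrier R"
  shows "eval p y = (\<Oplus>j\<in>{..<length p}. coeff p j \<otimes> y [^] j)"
proof -
  have "p = rev (map (coeff p) [0..<length p])"
    using coeff_list[of p] by (simp add: rev_map)
  then show ?thesis
    using eval_rev_map_eq_finsum[of "length p" "coeff p" y] assms by (metis coeff_in_carrier)
qed

lemma normalize_neq_Nil:
  assumes "c \<in> set p" "c \<noteq> \<zero>"
  shows "normalize p \<noteq> []"
  using assms by (induction p) (auto split: if_splits)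

end

lemma (in cring) finprod_pow_supported_on_pair:
  fixes e :: "'a \<Rightarrow> nat"
  assumes S: "S \<subseteq> carrier R" "finite S" "s1 \<in> S" "s2 \<in> S" "s1 \<noteq> s2"
    and e: "\<And>s. s \<noteq> s1 \<Longrightarrow> s \<noteq> s2 \<Longrightarrow> e s = 0"
  shows "finprod R (\<lambda>s. s [^] e s) S = s1 [^] e s1 \<otimes> s2 [^] e s2"
proof -
  have S': "S = insert s1 (insert s2 (S - {s1, s2}))" using S by auto
  have "finprod R (\<lambda>s. s [^] e s) (S - {s1, s2}) = finprod R (\<lambda>s. \<one>) (S - {s1, s2})"
    by (rule finprod_cong') (use e in auto)
  then have rest: "finprod R (\<lambda>s. s [^] e s) (S - {s1, s2}) = \<one>" by simp
  have "finprod R (\<lambda>s. s [^] e s) S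
      = s1 [^] e s1 \<otimes> (s2 [^] e s2 \<otimes> finprod R (\<lambda>s. s [^] e s) (S - {s1, s2}))"
    by (subst S', subst finprod_insert, (use S in auto)[4], subst finprod_insert) (use S in auto)
  then show ?thesis using rest S by (simp add: subsetD)
qed

context field
begin

lemma generate_field_insert_eq_simple_extension:
  assumes F: "subfield F R" and x: "x \<in> carrier R" "(algebraic over F) x"
  shows "generate_field R (insert x F) = simple_extension F x"
proof (rule generate_fieldI[symmetric])
  have Fc: "F \<subseteq> carrier R" using subfieldE(3)[OF F] .
  show "insert x F \<subseteq> carrier R" using Fc x(1) by auto
  show "subfield (simple_extension F x) R"
    using simple_extension_is_subfield[OF F x(1)] x(2) by simp
  show "insert x F \<subseteq> simple_extension F x"
    using simple_extension_incl[OF Fc x(1)] simple_extension_mem[OF subfieldE(1)[OF F] x(1)] by auto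
  fix K assume "subfield K R" "insert x F \<subseteq> K"
  then show "simple_extension F x \<subseteq> K"
    using simple_extension_subring_incl[OF subfieldE(1)[OF \<open>subfield K R\<close>]] by auto
qed

lemma fin_ext_generate_field_insert:
  assumes F: "subfield F R" and x: "x \<in> carrier R" "(algebraic over F) x"
  shows "fin_ext R F (generate_field R (insert x F))"
  unfolding fin_ext_def generate_field_insert_eq_simple_extension[OF assms]
  using F simple_extension_is_subfield[OF F x(1)] simple_extension_incl[OF subfieldE(3)[OF F] x(1)]
    finite_dimension_simple_extension[OF F x(1)] x(2)
  by simp

lemma algebraic_trans_generate_field_insert:
  assumes F: "subfield F R" and k: "subfield k R" "k \<subseteq> F"
    and a: "a \<in> carrier R" "(algebraic over F) a"
    and s: "s \<in> carrier R" "(algebraic over (generate_field R (insert a k))) s"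
  shows "(algebraic over F) s"
proof -
  define Fa where "Fa = simple_extension F a"
  have Fa: "subfield Fa R"
    unfolding Fa_def using simple_extension_is_subfield[OF F a(1)] a(2) by simp
  have "insert a k \<subseteq> Fa"
    unfolding Fa_def using simple_extension_incl[OF subfieldE(3)[OF F] a(1)]
      simple_extension_mem[OF subfieldE(1)[OF F] a(1)] k(2) by auto
  then have "generate_field R (insert a k) \<subseteq> Fa"
    using generate_field_min_subfield1[OF _ Fa] a(1) subfieldE(3)[OF k(1)] by auto
  then have "(algebraic over Fa) s" using algebraic_mono s(2) by blast
  then have "finite_dimension Fa (simple_extension Fa s)"
    using finite_dimension_simple_extension[OF Fa s(1)] by simp
  moreover have "finite_dimension F Fa"
    unfolding Fa_def using finite_dimension_simple_extension[OF F a(1)] a(2) by simp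
  ultimately have "finite_dimension F (simple_extension Fa s)"
    using telescopic_base_dim(1)[OF F Fa] by blast
  then show ?thesis
    using finite_dimension_imp_algebraic[OF F simple_extension_is_subring[OF subfieldE(1)[OF Fa] s(1)]]
      simple_extension_mem[OF subfieldE(1)[OF Fa] s(1)] by blast
qed

lemma subfield_Int:
  assumes "subfield A R" "subfield B R"
  shows "subfield (A \<inter> B) R"
proof (rule subfieldI'[OF subringI])
  note a = subringE[OF subfieldE(1)[OF assms(1)]] and b = subringE[OF subfieldE(1)[OF assms(2)]]
  show "A \<inter> B \<subseteq> carrier R" using a(1) by auto
  show "\<one> \<in> A \<inter> B" using a(3) b(3) by auto
  show "\<And>h. h \<in> A \<inter> B \<Longrightarrow> \<ominus> h \<in> A \<inter> B" using a(5) b(5) by auto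
  show "\<And>h1 h2. h1 \<in> A \<inter> B \<Longrightarrow> h2 \<in> A \<inter> B \<Longrightarrow> h1 \<otimes> h2 \<in> A \<inter> B" using a(6) b(6) by auto
  show "\<And>h1 h2. h1 \<in> A \<inter> B \<Longrightarrow> h2 \<in> A \<inter> B \<Longrightarrow> h1 \<oplus> h2 \<in> A \<inter> B" using a(7) b(7) by auto
  show "\<And>x. x \<in> A \<inter> B - {\<zero>} \<Longrightarrow> inv x \<in> A \<inter> B"
    using subfield_m_inv(1)[OF assms(1)] subfield_m_inv(1)[OF assms(2)] by auto
qed

subsection \<open>Algebraic dependence of two elements\<close>

lemma subfield_of_fractions:
  assumes S: "subring S R"
  shows "subfield {q \<in> carrier R. \<exists>v\<in>S. v \<noteq> \<zero> \<and> v \<otimes> q \<in> S} R"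
    (is "subfield ?Q R")
proof -
  have Sc: "S \<subseteq> carrier R" using subringE(1)[OF S] .
  note SE = subringE[OF S]
  show ?thesis
  proof (rule subfieldI'[OF subringI])
    show "?Q \<subseteq> carrier R" by auto
    show "\<one> \<in> ?Q" using SE(3) by (auto intro!: bexI[of _ \<one>])
  next
    fix h assume "h \<in> ?Q"
    then obtain v where v: "v \<in> S" "v \<noteq> \<zero>" "v \<otimes> h \<in> S" "h \<in> carrier R" by auto
    have "v \<otimes> (\<ominus> h) = \<ominus> (v \<otimes> h)" using v Sc by (simp add: r_minus subsetD)
    then show "\<ominus> h \<in> ?Q" using v SE(5) by (auto intro!: bexI[of _ v])
  next
    fix h1 h2 assume "h1 \<in> ?Q" "h2 \<in> ?Q"
    then obtain v1 v2 where v: "v1 \<in> S" "v1 \<noteq> \<zero>" "v1 \<otimes> h1 \<in> S" "h1 \<in> carrier R"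
        "v2 \<in> S" "v2 \<noteq> \<zero>" "v2 \<otimes> h2 \<in> S" "h2 \<in> carrier R" by auto
    have vc: "v1 \<in> carrier R" "v2 \<in> carrier R" using v Sc by auto
    have nz: "v1 \<otimes> v2 \<noteq> \<zero>" using v vc integral_iff by auto
    have vS: "v1 \<otimes> v2 \<in> S" using SE(6) v by auto
    have "(v1 \<otimes> v2) \<otimes> (h1 \<otimes> h2) = (v1 \<otimes> h1) \<otimes> (v2 \<otimes> h2)" using v vc by (simp add: m_ac)
    then show "h1 \<otimes> h2 \<in> ?Q" using nz vS SE(6) v by (auto intro!: bexI[of _ "v1 \<otimes> v2"])
    have "(v1 \<otimes> v2) \<otimes> (h1 \<oplus> h2) = v2 \<otimes> (v1 \<otimes> h1) \<oplus> v1 \<otimes> (v2 \<otimes> h2)"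
      using v vc by (simp add: m_ac r_distr)
    then show "h1 \<oplus> h2 \<in> ?Q" using nz vS SE(6,7) v by (auto intro!: bexI[of _ "v1 \<otimes> v2"])
  next
    fix h assume "h \<in> ?Q - {\<zero>}"
    then obtain v where v: "v \<in> S" "v \<noteq> \<zero>" "v \<otimes> h \<in> S" "h \<in> carrier R" "h \<noteq> \<zero>" by auto
    have vc: "v \<in> carrier R" using v Sc by auto
    have hU: "h \<in> Units R" using v field_Units by auto
    have "(v \<otimes> h) \<otimes> inv h = v" using v vc hU by (simp add: m_assoc)
    moreover have "v \<otimes> h \<noteq> \<zero>" using v vc integral_iff by auto
    ultimately show "inv h \<in> ?Q" using v hU by (auto intro!: bexI[of _ "v \<otimes> h"])
  qed
qed

lemma common_denominator:
  assumes S: "subring S R" and P: "set P \<subseteq> {q \<in> carrier R. \<exists>v\<in>S. v \<noteq> \<zero> \<and> v \<otimes> q \<in> S}"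
  shows "\<exists>V\<in>S. V \<noteq> \<zero> \<and> (\<forall>c\<in>set P. V \<otimes> c \<in> S)"
  using P
proof (induction P)
  case Nil
  then show ?case using subringE(3)[OF S] by (auto intro!: bexI[of _ \<one>])
next
  case (Cons c P)
  have Sc: "S \<subseteq> carrier R" using subringE(1)[OF S] .
  obtain V where V: "V \<in> S" "V \<noteq> \<zero>" "\<forall>c\<in>set P. V \<otimes> c \<in> S" using Cons by auto
  obtain v where v: "v \<in> S" "v \<noteq> \<zero>" "v \<otimes> c \<in> S" "c \<in> carrier R" using Cons.prems by auto
  have Vv: "V \<in> carrier R" "v \<in> carrier R" using V v Sc by auto
  have "(v \<otimes> V) \<otimes> d \<in> S" if "d \<in> set (c # P)" for d
  proof -
    have d: "d \<in> carrier R" using that Cons.prems by auto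
    show ?thesis
    proof (cases "d = c")
      case True
      then have "(v \<otimes> V) \<otimes> d = V \<otimes> (v \<otimes> c)" using Vv v by (simp add: m_ac)
      then show ?thesis using subringE(6)[OF S] V v by auto
    next
      case False
      then have "(v \<otimes> V) \<otimes> d = v \<otimes> (V \<otimes> d)" using Vv d by (simp add: m_assoc)
      then show ?thesis using subringE(6)[OF S] V v that False by auto
    qed
  qed
  moreover have "v \<otimes> V \<in> S" "v \<otimes> V \<noteq> \<zero>" using subringE(6)[OF S] V v Vv integral_iff by auto
  ultimately show ?case by blast
qed

definition alg_dependent_pair :: "'a set \<Rightarrow> 'a \<Rightarrow> 'a \<Rightarrow> bool" where
  "alg_dependent_pair k x y \<longleftrightarrow>
     (\<exists>(C :: nat \<Rightarrow> nat \<Rightarrow> 'a) n m. (\<forall>i j. C i j \<in> k) \<and> (\<exists>i<n. \<exists>j<m. C i j \<noteq> \<zero>) \<and>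
        (\<Oplus>j\<in>{..<m}. (\<Oplus>i\<in>{..<n}. C i j \<otimes> x [^] i) \<otimes> y [^] j) = \<zero>)"

lemma double_finsum_distrib:
  fixes C :: "nat \<Rightarrow> nat \<Rightarrow> 'a"
  assumes "\<And>i j. C i j \<in> carrier R" "x \<in> carrier R" "y \<in> carrier R"
  shows "(\<Oplus>j\<in>{..<m}. (\<Oplus>i\<in>{..<n}. C i j \<otimes> x [^] i) \<otimes> y [^] j)
       = (\<Oplus>j\<in>{..<m}. \<Oplus>i\<in>{..<n}. C i j \<otimes> x [^] i \<otimes> y [^] j)"
  by (rule finsum_cong') (auto intro!: finsum_ldistr simp: assms)

lemma alg_dependent_pair_sym:
  assumes k: "subfield k R" and xy: "x \<in> carrier R" "y \<in> carrier R"
    and dep: "alg_dependent_pair k x y"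
  shows "alg_dependent_pair k y x"
proof -
  obtain C :: "nat \<Rightarrow> nat \<Rightarrow> 'a" and n m where C: "\<forall>i j. C i j \<in> k" "\<exists>i<n. \<exists>j<m. C i j \<noteq> \<zero>"
     "(\<Oplus>j\<in>{..<m}. (\<Oplus>i\<in>{..<n}. C i j \<otimes> x [^] i) \<otimes> y [^] j) = \<zero>"
    using dep unfolding alg_dependent_pair_def by blast
  have Cc: "\<And>i j. C i j \<in> carrier R" using C(1) subfieldE(3)[OF k] by auto
  have "(\<Oplus>i\<in>{..<n}. (\<Oplus>j\<in>{..<m}. C i j \<otimes> y [^] j) \<otimes> x [^] i)
      = (\<Oplus>i\<in>{..<n}. \<Oplus>j\<in>{..<m}. C i j \<otimes> y [^] j \<otimes> x [^] i)"
    using double_finsum_distrib[of "\<lambda>j i. C i j" y x] Cc xy by simp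
  also have "\<dots> = (\<Oplus>i\<in>{..<n}. \<Oplus>j\<in>{..<m}. C i j \<otimes> x [^] i \<otimes> y [^] j)"
    by (intro finsum_cong') (auto simp: Cc xy m_ac)
  also have "\<dots> = (\<Oplus>j\<in>{..<m}. \<Oplus>i\<in>{..<n}. C i j \<otimes> x [^] i \<otimes> y [^] j)"
    by (rule finsum_swap) (auto simp: Cc xy)
  also have "\<dots> = \<zero>" using C(3) double_finsum_distrib[of C x y] Cc xy by simp
  finally show ?thesis
    unfolding alg_dependent_pair_def using C(1,2) by (intro exI[of _ "\<lambda>j i. C i j"] exI[of _ m] exI[of _ n]) auto
qed

lemma alg_dependent_pair_imp_algebraic:
  assumes k: "subfield k R" and xy: "x \<in> carrier R" "y \<in> carrier R"
    and dep: "alg_dependent_pair k x y" and x_tr: "(transcendental over k) x"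
  shows "(algebraic over (generate_field R (insert x k))) y"
proof -
  obtain C :: "nat \<Rightarrow> nat \<Rightarrow> 'a" and n m where C: "\<forall>i j. C i j \<in> k" "\<exists>i<n. \<exists>j<m. C i j \<noteq> \<zero>"
     "(\<Oplus>j\<in>{..<m}. (\<Oplus>i\<in>{..<n}. C i j \<otimes> x [^] i) \<otimes> y [^] j) = \<zero>"
    using dep unfolding alg_dependent_pair_def by blast
  have kc: "k \<subseteq> carrier R" using subfieldE(3)[OF k] .
  have Cc: "\<And>i j. C i j \<in> carrier R" using C(1) kc by auto
  define F where "F = generate_field R (insert x k)"
  have F: "subring F R"
    unfolding F_def by (intro subfieldE(1)[OF generate_field_is_subfield]) (use kc xy in auto)
  have kF: "k \<subseteq> F" "x \<in> F" unfolding F_def by (auto intro: generate_field.incl)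
  define q where "q j = (\<Oplus>i\<in>{..<n}. C i j \<otimes> x [^] i)" for j
  have qF: "q j \<in> F" for j
    unfolding q_def using kF C(1) subringE(6)[OF F] subring_nat_pow_closed[OF F kF(2)]
    by (intro subring_finsum_closed[OF F]) blast+
  have qc: "q j \<in> carrier R" for j using qF subringE(1)[OF F] by auto
  obtain i0 j0 where ij0: "i0 < n" "j0 < m" "C i0 j0 \<noteq> \<zero>" using C(2) by blast
  have "q j0 \<noteq> \<zero>"
  proof
    assume "q j0 = \<zero>"
    let ?p = "normalize (rev (map (\<lambda>i. C i j0) [0..<n]))"
    have "?p \<in> carrier (k[X])" unfolding sym[OF univ_poly_carrier]
      by (rule normalize_gives_polynomial) (use C(1) in auto)
    moreover have "eval ?p x = q j0"
      using eval_normalize[of "rev (map (\<lambda>i. C i j0) [0..<n])" x]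
        eval_rev_map_eq_finsum[of n "\<lambda>i. C i j0" x] Cc xy by (auto simp: q_def)
    ultimately have "?p = []" using eval_transcendental[OF x_tr] \<open>q j0 = \<zero>\<close> by metis
    moreover have "?p \<noteq> []" by (rule normalize_neq_Nil[of "C i0 j0"]) (use ij0 in auto)
    ultimately show False by simp
  qed
  let ?P = "normalize (rev (map q [0..<m]))"
  have "?P \<in> carrier (F[X])" unfolding sym[OF univ_poly_carrier]
    by (rule normalize_gives_polynomial) (use qF in auto)
  moreover have "?P \<noteq> []" by (rule normalize_neq_Nil[of "q j0"]) (use ij0 \<open>q j0 \<noteq> \<zero>\<close> in auto)
  moreover have "eval ?P y = \<zero>"
    using eval_normalize[of "rev (map q [0..<m])" y] eval_rev_map_eq_finsum[of m q y] qc xy C(3)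
    by (auto simp: q_def)
  ultimately show ?thesis unfolding F_def using algebraicI by blast
qed

lemma simple_extension_elem_eq_finsum:
  assumes k: "subring k R" and x: "x \<in> carrier R" and z: "z \<in> simple_extension k x"
  shows "\<exists>c N. (\<forall>i. c i \<in> k) \<and> (\<forall>n\<ge>N. z = (\<Oplus>i\<in>{..<n}. c i \<otimes> x [^] (i :: nat)))"
proof -
  have kc: "k \<subseteq> carrier R" using subringE(1)[OF k] .
  obtain p where p: "p \<in> carrier (k[X])" "z = eval p x"
    using z simple_extension_as_eval_img[OF kc x] by (auto simp del: eval.simps)
  have pk: "set p \<subseteq> k" using p(1) polynomial_incl unfolding sym[OF univ_poly_carrier] by blast
  have ck: "coeff p i \<in> k" for i
  proof -
    have "coeff p i \<in> set p \<union> {\<zero>}" using coeff_img(3)[of p] by (metis rangeI)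
    then show ?thesis using pk subringE(2)[OF k] by auto
  qed
  have pc: "set p \<subseteq> carrier R" using pk kc by blast
  have expand: "z = (\<Oplus>i\<in>{..<n}. coeff p i \<otimes> x [^] i)" if "length p \<le> n" for n
  proof -
    have "z = (\<Oplus>i\<in>{..<length p}. coeff p i \<otimes> x [^] i)"
      using eval_eq_finsum_coeff[OF pc x] p(2) by simp
    also have "\<dots> = (\<Oplus>i\<in>{..<n}. coeff p i \<otimes> x [^] i)"
      by (rule finsum_lessThan_eq_if_zero_above[symmetric])
        (use that coeff_length x coeff_in_carrier[OF pc] in auto)
    finally show ?thesis .
  qed
  show ?thesis
    by (rule exI[of _ "coeff p"], rule exI[of _ "length p"]) (use ck expand in blast)
qed

lemma alg_dependent_pairI:
  fixes w :: "nat \<Rightarrow> 'a"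
  assumes k: "subfield k R" and xy: "x \<in> carrier R" "y \<in> carrier R"
    and w: "\<And>j. w j \<in> simple_extension k x" "l < m" "w l \<noteq> \<zero>"
    and sum: "(\<Oplus>j\<in>{..<m}. w j \<otimes> y [^] j) = \<zero>"
  shows "alg_dependent_pair k x y"
proof -
  have kc: "k \<subseteq> carrier R" using subfieldE(3)[OF k] .
  have wc: "w j \<in> carrier R" for j using w(1) simple_extension_in_carrier[OF kc xy(1)] by blast
  have "\<forall>j. \<exists>c N. (\<forall>i. c i \<in> k) \<and> (\<forall>n\<ge>N. w j = (\<Oplus>i\<in>{..<n}. c i \<otimes> x [^] (i :: nat)))"
    using simple_extension_elem_eq_finsum[OF subfieldE(1)[OF k] xy(1) w(1)] by blast
  then obtain c N where ck: "\<And>j i. c j i \<in> k"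
    and cN: "\<And>j n. N j \<le> n \<Longrightarrow> w j = (\<Oplus>i\<in>{..<n}. c j i \<otimes> x [^] (i :: nat))"
    by metis
  define n where "n = (\<Sum>j<m. N j)"
  define C where "C i j = c j i" for i j
  have inner: "(\<Oplus>i\<in>{..<n}. C i j \<otimes> x [^] i) = w j" if "j < m" for j
  proof -
    have "N j \<le> n" unfolding n_def using that by (intro member_le_sum) auto
    then show ?thesis unfolding C_def by (rule cN[symmetric])
  qed
  have "(\<Oplus>j\<in>{..<m}. (\<Oplus>i\<in>{..<n}. C i j \<otimes> x [^] i) \<otimes> y [^] j) = (\<Oplus>j\<in>{..<m}. w j \<otimes> y [^] j)"
    by (rule finsum_cong') (simp_all add: inner wc xy)
  then have relation: "(\<Oplus>j\<in>{..<m}. (\<Oplus>i\<in>{..<n}. C i j \<otimes> x [^] i) \<otimes> y [^] j) = \<zero>"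
    using sum by simp
  have nonzero: "\<exists>i<n. C i l \<noteq> \<zero>"
  proof (rule ccontr)
    assume "\<not> (\<exists>i<n. C i l \<noteq> \<zero>)"
    then have "(\<Oplus>i\<in>{..<n}. C i l \<otimes> x [^] i) = (\<Oplus>i\<in>{..<n}. \<zero>)"
      by (intro finsum_cong') (simp_all add: xy)
    then show False using inner[OF w(2)] w(3) by (simp add: finsum_zero)
  qed
  have "\<forall>i j. C i j \<in> k" unfolding C_def using ck by blast
  then show ?thesis
    unfolding alg_dependent_pair_def using nonzero relation w(2)
    by (intro exI[of _ C] exI[of _ n] exI[of _ m]) blast
qed

lemma algebraic_imp_alg_dependent_pair:
  assumes k: "subfield k R" and xy: "x \<in> carrier R" "y \<in> carrier R"
    and y_alg: "(algebraic over (generate_field R (insert x k))) y"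
  shows "alg_dependent_pair k x y"
proof -
  have kc: "k \<subseteq> carrier R" using subfieldE(3)[OF k] .
  define S where "S = simple_extension k x"
  have S: "subring S R" unfolding S_def using simple_extension_is_subring[OF subfieldE(1)[OF k] xy(1)] .
  have Sc: "S \<subseteq> carrier R" using subringE(1)[OF S] .
  define Q where "Q = {q \<in> carrier R. \<exists>v\<in>S. v \<noteq> \<zero> \<and> v \<otimes> q \<in> S}"
  have Q: "subfield Q R" unfolding Q_def by (rule subfield_of_fractions[OF S])
  have "S \<subseteq> Q" unfolding Q_def using Sc subringE(3,6)[OF S] by (auto intro!: bexI[of _ \<one>])
  moreover have "insert x k \<subseteq> S" unfolding S_def
    using simple_extension_incl[OF kc xy(1)] simple_extension_mem[OF subfieldE(1)[OF k] xy(1)] by auto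
  ultimately have FQ: "generate_field R (insert x k) \<subseteq> Q"
    using generate_field_min_subfield1[OF _ Q, of "insert x k"] kc xy(1) by blast
  have F: "subring (generate_field R (insert x k)) R"
    by (intro subfieldE(1)[OF generate_field_is_subfield]) (use kc xy in auto)
  obtain P where P: "P \<in> carrier ((generate_field R (insert x k))[X])" "P \<noteq> []" "eval P y = \<zero>"
    using algebraicE[OF F xy(2) y_alg] by blast
  have PQ: "set P \<subseteq> Q" using P(1) FQ polynomial_incl unfolding sym[OF univ_poly_carrier] by blast
  then have Pc: "set P \<subseteq> carrier R" unfolding Q_def by auto
  obtain V where V: "V \<in> S" "V \<noteq> \<zero>" "\<forall>c\<in>set P. V \<otimes> c \<in> S"
    using common_denominator[OF S PQ[unfolded Q_def]] by blast
  have Vc: "V \<in> carrier R" using V Sc by auto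
  define w where "w j = V \<otimes> coeff P j" for j
  have "w j \<in> simple_extension k x" for j
  proof (cases "j < length P")
    case True
    then have "coeff P j \<in> set P" using coeff_img_restrict[of P] by blast
    then show ?thesis unfolding w_def S_def[symmetric] using V by auto
  next
    case False
    then show ?thesis unfolding w_def S_def[symmetric] using coeff_length[of P j] Vc subringE(2)[OF S] by auto
  qed
  moreover have "length P - 1 < length P" using P(2) by simp
  moreover have "w (length P - 1) \<noteq> \<zero>"
  proof -
    have "coeff P (length P - 1) = hd P" using lead_coeff_simp[OF P(2)] by simp
    moreover have "hd P \<noteq> \<zero>" using P(1,2) unfolding sym[OF univ_poly_carrier] polynomial_def by auto
    moreover have "hd P \<in> carrier R" using Pc P(2) by (cases P) auto
    ultimately show ?thesis unfolding w_def using Vc V(2) integral_iff by auto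
  qed
  moreover have "(\<Oplus>j\<in>{..<length P}. w j \<otimes> y [^] j) = \<zero>"
  proof -
    have "(\<Oplus>j\<in>{..<length P}. w j \<otimes> y [^] j) = (\<Oplus>j\<in>{..<length P}. V \<otimes> (coeff P j \<otimes> y [^] j))"
      unfolding w_def by (rule finsum_cong') (simp_all add: Vc xy Pc m_assoc)
    also have "\<dots> = V \<otimes> (\<Oplus>j\<in>{..<length P}. coeff P j \<otimes> y [^] j)"
      by (rule finsum_rdistr[symmetric]) (simp_all add: Vc xy Pc)
    also have "\<dots> = V \<otimes> eval P y" using eval_eq_finsum_coeff[OF Pc xy(2)] by simp
    finally show ?thesis using P(3) Vc by simp
  qed
  ultimately show ?thesis by (rule alg_dependent_pairI[OF k xy])
qed

lemma alg_dependent_pair_if_algebraic_over_simple: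
  assumes k: "subfield k R" and a: "a \<in> carrier R" and s: "s1 \<in> carrier R" "s2 \<in> carrier R"
    and alg: "(algebraic over (generate_field R (insert a k))) s1"
             "(algebraic over (generate_field R (insert a k))) s2"
  shows "alg_dependent_pair k s1 s2"
proof -
  have kc: "k \<subseteq> carrier R" using subfieldE(3)[OF k] .
  have k_sub: "k \<subseteq> generate_field R (insert s k)" for s by (auto intro: generate_field.incl)
  consider "(algebraic over k) s2" | "(algebraic over k) s1"
    | "(transcendental over k) s1" "(transcendental over k) s2"
    unfolding over_def by blast
  then show ?thesis
  proof cases
    case 1
    then show ?thesis
      using algebraic_imp_alg_dependent_pair[OF k s] algebraic_mono[OF k_sub] by blast
  next
    case 2
    then show ?thesis
      using algebraic_imp_alg_dependent_pair[OF k s(2,1)] alg_dependent_pair_sym[OF k s(2,1)]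
        algebraic_mono[OF k_sub] by blast
  next
    case 3
    \<comment> \<open>s1 is transcendental, so a is algebraic over k(s1), hence so is s2.\<close>
    have "alg_dependent_pair k s1 a"
      using alg_dependent_pair_sym[OF k a s(1)] algebraic_imp_alg_dependent_pair[OF k a s(1) alg(1)] .
    then have "(algebraic over (generate_field R (insert s1 k))) a"
      using alg_dependent_pair_imp_algebraic[OF k s(1) a _ 3(1)] by blast
    then have "(algebraic over (generate_field R (insert s1 k))) s2"
      using algebraic_trans_generate_field_insert[OF _ k k_sub a _ s(2) alg(2)]
        generate_field_is_subfield kc s by auto
    then show ?thesis using algebraic_imp_alg_dependent_pair[OF k s] by blast
  qed
qed

lemma alg_dependent_pair_imp_not_alg_indep:
  assumes k: "subfield k R" and S: "S \<subseteq> carrier R" "finite S" "s1 \<in> S" "s2 \<in> S" "s1 \<noteq> s2"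
    and dep: "alg_dependent_pair k s1 s2"
  shows "\<not> alg_indep R k S"
proof -
  obtain C :: "nat \<Rightarrow> nat \<Rightarrow> 'a" and n m where C: "\<forall>i j. C i j \<in> k" "\<exists>i<n. \<exists>j<m. C i j \<noteq> \<zero>"
     "(\<Oplus>j\<in>{..<m}. (\<Oplus>i\<in>{..<n}. C i j \<otimes> s1 [^] i) \<otimes> s2 [^] j) = \<zero>"
    using dep unfolding alg_dependent_pair_def by blast
  have Cc: "\<And>i j. C i j \<in> carrier R" using C(1) subfieldE(3)[OF k] by auto
  have sc: "s1 \<in> carrier R" "s2 \<in> carrier R" using S by auto
  define exps :: "nat \<times> nat \<Rightarrow> 'a \<Rightarrow> nat" where
    "exps = (\<lambda>(i, j) s. if s = s1 then i else if s = s2 then j else 0)"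
  define E where "E = exps ` ({..<n} \<times> {..<m})"
  define c where "c e = C (e s1) (e s2)" for e :: "'a \<Rightarrow> nat"
  have exps_at: "exps p s1 = fst p" "exps p s2 = snd p" for p
    using S(5) by (auto simp: exps_def split: prod.split)
  have prod_c: "finprod R (\<lambda>s. s [^] e s) S \<in> carrier R" for e :: "'a \<Rightarrow> nat"
    using S(1) by (intro finprod_closed) auto
  have inj: "inj_on exps ({..<n} \<times> {..<m})"
    by (rule inj_onI) (metis exps_at prod.collapse)
  have "finsum R (\<lambda>e. c e \<otimes> finprod R (\<lambda>s. s [^] e s) S) E
      = finsum R (\<lambda>p. c (exps p) \<otimes> finprod R (\<lambda>s. s [^] exps p s) S) ({..<n} \<times> {..<m})"
    unfolding E_def by (rule finsum_reindex[OF _ inj]) (auto simp: c_def Cc prod_c)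
  also have "\<dots> = finsum R (\<lambda>p. C (fst p) (snd p) \<otimes> s1 [^] fst p \<otimes> s2 [^] snd p) ({..<n} \<times> {..<m})"
    using finprod_pow_supported_on_pair[OF S, of "exps _"] exps_at sc
    by (intro finsum_cong') (auto simp: c_def Cc m_assoc exps_def)
  also have "\<dots> = (\<Oplus>i\<in>{..<n}. \<Oplus>j\<in>{..<m}. C i j \<otimes> s1 [^] i \<otimes> s2 [^] j)"
    by (subst finsum_cartesian_product) (auto simp: Cc sc)
  also have "\<dots> = (\<Oplus>j\<in>{..<m}. \<Oplus>i\<in>{..<n}. C i j \<otimes> s1 [^] i \<otimes> s2 [^] j)"
    by (rule finsum_swap) (auto simp: Cc sc)
  also have "\<dots> = \<zero>" using C(3) double_finsum_distrib[of C s1 s2] Cc sc by simp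
  finally have "finsum R (\<lambda>e. c e \<otimes> finprod R (\<lambda>s. s [^] e s) S) E = \<zero>" .
  moreover obtain i0 j0 where "i0 < n" "j0 < m" "C i0 j0 \<noteq> \<zero>" using C(2) by blast
  then have "exps (i0, j0) \<in> E" "c (exps (i0, j0)) \<noteq> \<zero>" unfolding E_def c_def using exps_at by auto
  moreover have "finite E" "\<forall>e\<in>E. \<forall>x. x \<notin> S \<longrightarrow> e x = 0" "c \<in> E \<rightarrow> k"
    unfolding E_def c_def exps_def using S C(1) by auto
  ultimately show ?thesis unfolding alg_indep_def by blast
qed

lemma trdeg_le_1_if_algebraic_over_simple:
  assumes k: "subfield k R" and a: "a \<in> carrier R" and K0: "K0 \<subseteq> carrier R"
    and alg: "\<And>x. x \<in> K0 \<Longrightarrow> (algebraic over (generate_field R (insert a k))) x"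
  shows "trdeg R k K0 \<le> 1"
  unfolding trdeg_def
proof (rule SUP_least)
  fix S assume "S \<in> {S. S \<subseteq> K0 \<and> alg_indep R k S}"
  then have S: "S \<subseteq> K0" "alg_indep R k S" by auto
  have fin: "finite S" using S(2) unfolding alg_indep_def by auto
  have "card S \<le> 1"
  proof (rule ccontr)
    assume "\<not> card S \<le> 1"
    then obtain s1 s2 where s: "s1 \<in> S" "s2 \<in> S" "s1 \<noteq> s2" using card_le_Suc0_iff_eq[OF fin] by auto
    then have "alg_dependent_pair k s1 s2"
      using alg_dependent_pair_if_algebraic_over_simple[OF k a] alg S(1) K0 by blast
    then show False using alg_dependent_pair_imp_not_alg_indep[OF k _ fin s] S K0 by blast
  qed
  then show "enat (card S) \<le> 1" by (simp add: one_enat_def)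
qed

subsection \<open>Descent of simple extensions\<close>

lemma descends_generate_field_insert:
  assumes K0: "subfield K0 R" and F: "subfield F R" "K0 \<subseteq> F"
    and lam: "lam \<in> carrier R" "(algebraic over F) lam" and Irr_K0: "set (Irr F lam) \<subseteq> K0"
  shows "descends R F (generate_field R (insert lam F)) K0"
proof -
  note g = IrrE[OF F(1) lam]
  have g_K0: "Irr F lam \<in> carrier (K0[X])"
    unfolding sym[OF univ_poly_carrier] polynomial_def using Irr_K0 g(3) by auto
  have g_ne: "Irr F lam \<noteq> []" using g(1,2) unfolding ring_irreducible_def univ_poly_zero by auto
  have lam_K0: "(algebraic over K0) lam" using algebraicI[OF g_K0 g_ne g(4)] .
  have "degree (Irr K0 lam) = degree (Irr F lam)"
  proof (rule antisym)
    show "degree (Irr K0 lam) \<le> degree (Irr F lam)"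
      using pdivides_imp_degree_le[OF subfieldE(1)[OF K0] IrrE(1)[OF K0 lam(1) lam_K0] g_K0 g_ne]
        Irr_minimal[OF K0 lam(1) lam_K0 g_K0 g(4)] by blast
    have "Irr K0 lam \<in> carrier (F[X])"
      using IrrE(1)[OF K0 lam(1) lam_K0] F(2) unfolding sym[OF univ_poly_carrier] polynomial_def by auto
    moreover have "Irr K0 lam \<noteq> []"
      using IrrE(1,2)[OF K0 lam(1) lam_K0] unfolding ring_irreducible_def univ_poly_zero by auto
    ultimately show "degree (Irr F lam) \<le> degree (Irr K0 lam)"
      using pdivides_imp_degree_le[OF subfieldE(1)[OF F(1)] g(1)]
        Irr_minimal[OF F(1) lam(1) lam(2) _ IrrE(4)[OF K0 lam(1) lam_K0]] by blast
  qed
  \<comment> \<open>So the power basis of \<open>lam\<close> over \<open>K0\<close> is one over \<open>F\<close> as well.\<close>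
  define bs where "bs = exp_base lam (degree (Irr F lam))"
  define B where "B = simple_extension K0 lam"
  have B: "subring B R" unfolding B_def using simple_extension_is_subring[OF subfieldE(1)[OF K0] lam(1)] .
  have span_K0: "Span K0 bs = B" and indep_K0: "independent K0 bs"
    unfolding bs_def B_def using Span_exp_base[OF K0 lam(1) lam_K0] exp_base_independent[OF K0 lam(1) lam_K0]
      \<open>degree (Irr K0 lam) = degree (Irr F lam)\<close> by simp_all
  have "K0 \<subseteq> B" unfolding B_def using simple_extension_incl[OF subfieldE(3)[OF K0] lam(1)] .
  then show ?thesis
    unfolding descends_def generate_field_insert_eq_simple_extension[OF F(1) lam]
  proof (intro exI conjI)
    show "B \<subseteq> simple_extension F lam" unfolding B_def using mono_simple_extension[OF F(2)] .
    show "\<one> \<in> B" "\<forall>x\<in>B. \<forall>y\<in>B. x \<oplus> y \<in> B \<and> x \<otimes> y \<in> B"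
      "\<forall>a\<in>K0. \<forall>x\<in>B. a \<otimes> x \<in> B"
      using subringE(3,6,7)[OF B] \<open>K0 \<subseteq> B\<close> by auto
    have "set bs \<subseteq> carrier R" unfolding bs_def by (rule exp_base_closed[OF lam(1)])
    then show "set bs \<subseteq> B" using Span_base_incl[OF K0] span_K0 by metis
    show "Span F bs = simple_extension F lam" "independent F bs"
      unfolding bs_def using Span_exp_base[OF F(1) lam] exp_base_independent[OF F(1) lam] by simp_all
  qed (rule indep_K0, rule span_K0)
qed

end

context algebraically_closed
begin

lemma coeffs_in_subfield_if_roots_in:
  assumes A: "subfield A L"
  shows "\<lbrakk> g \<in> carrier (poly_ring L); g \<noteq> []; lead_coeff g = \<one>; \<And>r. is_root g r \<Longrightarrow> r \<in> A \<rbrakk>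
         \<Longrightarrow> set g \<subseteq> A"
proof (induction "degree g" arbitrary: g)
  case 0
  then obtain c where "g = [c]" by (cases g) auto
  then show ?case using 0 subringE(3)[OF subfieldE(1)[OF A]] by auto
next
  case (Suc d)
  have "size (roots g) = Suc d" using roots_over_carrier[OF Suc.prems(1)] Suc.hyps(2) unfolding splitted_def by simp
  then have "roots g \<noteq> {#}" by auto
  then obtain r where r: "r \<in> carrier L" "r \<in># roots g" "[\<one>, \<ominus> r] \<in> carrier (poly_ring L)"
      "[\<one>, \<ominus> r] pdivides g"
    using not_empty_rootsE[OF Suc.prems(1)] by blast
  have rA: "r \<in> A" using roots_mem_iff_is_root[OF Suc.prems(1)] r(2) Suc.prems(4) by simp
  obtain q where q: "q \<in> carrier (poly_ring L)" "g = poly_mult [\<one>, \<ominus> r] q"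
    using r(4) unfolding pdivides_def factor_def univ_poly_mult by auto
  have pl: "polynomial (carrier L) [\<one>, \<ominus> r]" "polynomial (carrier L) q"
    using r(3) q(1) unfolding univ_poly_carrier by auto
  have "q \<noteq> []" using q(2) Suc.prems(2) r(1) poly_mult_zero(2)[of "[\<one>, \<ominus> r]"] by auto
  then have dq: "d = degree q" and lq: "lead_coeff q = \<one>"
    using poly_mult_degree_eq[OF carrier_is_subring pl] poly_mult_lead_coeff[OF carrier_is_subring pl]
      polynomial_incl[OF pl(2)] Suc.hyps(2) Suc.prems(3) q(2)
    by (auto simp: hd_in_set subsetD)
  have "r' \<in> A" if "is_root q r'" for r'
  proof -
    have r': "r' \<in> carrier L" "eval q r' = \<zero>" using that unfolding is_root_def by auto
    have "eval g r' = eval [\<one>, \<ominus> r] r' \<otimes> eval q r'"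
      unfolding q(2) by (rule eval_poly_mult) (use r(1) r' pl(2) polynomial_incl in auto)
    then have "is_root g r'" unfolding is_root_def using r' r(1) Suc.prems(2) by simp
    then show ?thesis using Suc.prems(4) by blast
  qed
  then have "set q \<subseteq> A" using Suc.hyps(1)[OF dq q(1) \<open>q \<noteq> []\<close> lq] by blast
  then have "polynomial A [\<one>, \<ominus> r]" "polynomial A q"
    using rA lq subringE(3,5)[OF subfieldE(1)[OF A]] unfolding polynomial_def by auto
  then have "polynomial A g" unfolding q(2) using poly_mult_closed[OF subfieldE(1)[OF A]] by blast
  then show ?case using polynomial_incl by blast
qed

lemma Irr_coeffs_algebraic:
  assumes A: "subfield A L" and F: "subfield F L" "A \<subseteq> F"
    and lam: "lam \<in> carrier L" "(algebraic over A) lam"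
  shows "set (Irr F lam) \<subseteq> {x \<in> carrier L. (algebraic over A) x}"
proof (rule coeffs_in_subfield_if_roots_in[OF subfield_of_algebraics[OF A]])
  have lam_F: "(algebraic over F) lam" using algebraic_mono[OF F(2) lam(2)] .
  note g = IrrE[OF F(1) lam(1) lam_F]
  show "Irr F lam \<in> carrier (poly_ring L)"
    using carrier_polynomial_shell[OF subfieldE(1)[OF F(1)] g(1)] .
  then show "Irr F lam \<noteq> []"
    using g(1,2) unfolding ring_irreducible_def univ_poly_zero by auto
  show "lead_coeff (Irr F lam) = \<one>" by (rule g(3))
  fix r assume "is_root (Irr F lam) r"
  then have r: "r \<in> carrier L" "eval (Irr F lam) r = \<zero>" unfolding is_root_def by auto
  note h = IrrE[OF A lam]
  have "Irr A lam \<in> carrier (F[X])"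
    using h(1) F(2) unfolding sym[OF univ_poly_carrier] polynomial_def by auto
  then have "Irr F lam pdivides Irr A lam" using Irr_minimal[OF F(1) lam(1) lam_F _ h(4)] by blast
  then obtain q where q: "q \<in> carrier (poly_ring L)" "Irr A lam = poly_mult (Irr F lam) q"
    unfolding pdivides_def factor_def univ_poly_mult by auto
  have "eval (Irr A lam) r = eval (Irr F lam) r \<otimes> eval q r"
    unfolding q(2) by (rule eval_poly_mult)
      (use r \<open>Irr F lam \<in> carrier (poly_ring L)\<close> q(1) polynomial_incl in \<open>auto simp: univ_poly_carrier[symmetric]\<close>)
  then have "eval (Irr A lam) r = \<zero>"
    using r q(1) polynomial_incl[of "carrier L" q] eval_in_carrier by (auto simp: univ_poly_carrier[symmetric])
  moreover have "Irr A lam \<noteq> []" using h(1,2) unfolding ring_irreducible_def univ_poly_zero by auto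
  ultimately show "r \<in> {x \<in> carrier L. (algebraic over A) x}" using algebraicI[OF h(1)] r(1) by blast
qed

lemma ed_generate_field_insert_le_1:
  assumes k: "subfield k L" and F: "subfield F L" "k \<subseteq> F" and a: "a \<in> F"
    and lam: "lam \<in> carrier L" "(algebraic over (generate_field L (insert a k))) lam"
  shows "ed L k F (generate_field L (insert lam F)) \<le> 1"
proof -
  have kc: "k \<subseteq> carrier L" and ac: "a \<in> carrier L" using subfieldE(3)[OF k] subfieldE(3)[OF F(1)] a by auto
  define ka where "ka = generate_field L (insert a k)"
  have ka: "subfield ka L" unfolding ka_def using generate_field_is_subfield kc ac by auto
  have ka_F: "ka \<subseteq> F" unfolding ka_def using generate_field_min_subfield1[OF _ F(1)] F(2) a kc ac by auto
  define K0 where "K0 = F \<inter> {x \<in> carrier L. (algebraic over ka) x}"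
  have K0: "subfield K0 L" unfolding K0_def using subfield_Int[OF F(1) subfield_of_algebraics[OF ka]] .
  have "k \<subseteq> K0"
    unfolding K0_def ka_def using F(2) kc algebraic_self[OF subfieldE(1)[OF ka[unfolded ka_def]]]
    by (auto intro: generate_field.incl)
  moreover have "K0 \<subseteq> F" unfolding K0_def by blast
  moreover have "descends L F (generate_field L (insert lam F)) K0"
  proof (rule descends_generate_field_insert[OF K0 F(1) \<open>K0 \<subseteq> F\<close> lam(1)])
    show lam_F: "(algebraic over F) lam" using algebraic_mono[OF ka_F lam(2)[folded ka_def]] .
    have "set (Irr F lam) \<subseteq> F"
      using IrrE(1)[OF F(1) lam(1) lam_F] polynomial_incl unfolding sym[OF univ_poly_carrier] by blast
    then show "set (Irr F lam) \<subseteq> K0"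
      unfolding K0_def using Irr_coeffs_algebraic[OF ka F(1) ka_F lam(1) lam(2)[folded ka_def]] by blast
  qed
  moreover have "trdeg L k K0 \<le> 1"
    by (rule trdeg_le_1_if_algebraic_over_simple[OF k ac]) (auto simp: K0_def ka_def)
  ultimately show ?thesis unfolding ed_def by (intro INF_lower2[of K0]) (use K0 in auto)
qed

end

subsection \<open>Radical and Artin-Schreier towers\<close>

context domain
begin

text \<open>The polynomials \<open>X^n - a\<close> and \<open>X^n - X - a\<close>, coefficients listed from the leading one.\<close>

definition radical_poly :: "nat \<Rightarrow> 'a \<Rightarrow> 'a list" where
  "radical_poly n a = \<one> # replicate (n - 1) \<zero> @ [\<ominus> a]"

definition artin_schreier_poly :: "nat \<Rightarrow> 'a \<Rightarrow> 'a list" where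
  "artin_schreier_poly n a = \<one> # replicate (n - 2) \<zero> @ [\<ominus> \<one>, \<ominus> a]"

lemma radical_poly_carrier:
  assumes "subring K R" "a \<in> K"
  shows "radical_poly n a \<in> carrier (K[X])"
  unfolding radical_poly_def sym[OF univ_poly_carrier] polynomial_def
  using subringE(2,3,5)[OF assms(1)] assms(2) by (simp add: set_replicate_conv_if)

lemma artin_schreier_poly_carrier:
  assumes "subring K R" "a \<in> K"
  shows "artin_schreier_poly n a \<in> carrier (K[X])"
  unfolding artin_schreier_poly_def sym[OF univ_poly_carrier] polynomial_def
  using subringE(2,3,5)[OF assms(1)] assms(2) by (simp add: set_replicate_conv_if)

lemma eval_radical_poly:
  assumes "n \<ge> 1" "a \<in> carrier R" "y \<in> carrier R"
  shows "eval (radical_poly n a) y = y [^] n \<ominus> a"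
proof -
  have "radical_poly n a = monom \<one> (n - 1) @ [\<ominus> a]" unfolding radical_poly_def monom_def by simp
  then have "eval (radical_poly n a) y = eval (monom \<one> (n - 1)) y \<otimes> y \<oplus> \<ominus> a"
    using eval_append[of "monom \<one> (n - 1)" "[\<ominus> a]" y] assms monom_in_carrier[of \<one>] by simp
  also have "\<dots> = y [^] (n - 1) \<otimes> y \<oplus> \<ominus> a" using eval_monom[of \<one> y "n - 1"] assms by simp
  also have "y [^] (n - 1) \<otimes> y = y [^] n" using assms nat_pow_Suc[of y "n - 1"] by simp
  finally show ?thesis by (simp add: minus_eq)
qed

lemma eval_artin_schreier_poly:
  assumes "n \<ge> 2" "a \<in> carrier R" "y \<in> carrier R"
  shows "eval (artin_schreier_poly n a) y = y [^] n \<ominus> y \<ominus> a"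
proof -
  have "artin_schreier_poly n a = monom \<one> (n - 2) @ [\<ominus> \<one>, \<ominus> a]"
    unfolding artin_schreier_poly_def monom_def by simp
  then have "eval (artin_schreier_poly n a) y = eval (monom \<one> (n - 2)) y \<otimes> (y \<otimes> y) \<oplus> (\<ominus> y \<oplus> \<ominus> a)"
    using eval_append[of "monom \<one> (n - 2)" "[\<ominus> \<one>, \<ominus> a]" y] assms monom_in_carrier[of \<one>]
    by (simp add: l_minus numeral_2_eq_2)
  also have "\<dots> = y [^] Suc (Suc (n - 2)) \<oplus> (\<ominus> y \<oplus> \<ominus> a)"
    using eval_monom[of \<one> y "n - 2"] assms by (simp add: m_assoc)
  also have "Suc (Suc (n - 2)) = n" using assms(1) by simp
  finally show ?thesis using assms by (simp add: minus_eq a_assoc)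
qed

lemma algebraic_if_radical_or_artin_schreier:
  fixes n :: nat
  assumes K: "subring K R" and a: "a \<in> K" and lam: "lam \<in> carrier R"
    and eq: "(n \<ge> 1 \<and> lam [^] n \<ominus> a = \<zero>) \<or> (n \<ge> 2 \<and> lam [^] n \<ominus> lam \<ominus> a = \<zero>)"
  shows "(algebraic over K) lam"
proof -
  have ac: "a \<in> carrier R" using a subringE(1)[OF K] by auto
  from eq show ?thesis
  proof
    assume radical: "n \<ge> 1 \<and> lam [^] n \<ominus> a = \<zero>"
    show ?thesis
    proof (rule algebraicI[OF radical_poly_carrier[OF K a, of n]])
      show "radical_poly n a \<noteq> []" by (simp add: radical_poly_def)
      show "eval (radical_poly n a) lam = \<zero>" using radical eval_radical_poly[OF _ ac lam] by simp
    qed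
  next
    assume artin_schreier: "n \<ge> 2 \<and> lam [^] n \<ominus> lam \<ominus> a = \<zero>"
    show ?thesis
    proof (rule algebraicI[OF artin_schreier_poly_carrier[OF K a, of n]])
      show "artin_schreier_poly n a \<noteq> []" by (simp add: artin_schreier_poly_def)
      show "eval (artin_schreier_poly n a) lam = \<zero>"
        using artin_schreier eval_artin_schreier_poly[OF _ ac lam] by simp
    qed
  qed
qed

end

context field
begin

lemma embeds_over_refl:
  assumes "M \<subseteq> carrier R" "\<one> \<in> M"
  shows "embeds_over R K M M"
  unfolding embeds_over_def
  by (rule exI[of _ "\<lambda>z. z"]) (use assms in \<open>auto intro!: ring_hom_memI\<close>)

lemma solvable_ext_radical:
  fixes n :: nat
  assumes K: "subfield K R" and a: "a \<in> K" and lam: "lam \<in> carrier R" "n \<ge> 1" "lam [^] n \<ominus> a = \<zero>"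
  shows "solvable_ext R K (generate_field R (insert lam K))"
proof -
  define M where "M = generate_field R (insert lam K)"
  have "insert lam K \<subseteq> carrier R" using lam(1) subfieldE(3)[OF K] by auto
  then have "embeds_over R K M M"
    unfolding M_def by (intro embeds_over_refl generate_field_incl) (auto intro: generate_field.one)
  then show ?thesis
    unfolding solvable_ext_def M_def[symmetric]
    by (intro exI[of _ 1] exI[of _ "\<lambda>i. if i = 0 then K else M"] exI[of _ "\<lambda>_. lam"]
        exI[of _ "\<lambda>_. a"] exI[of _ "\<lambda>_. n"]) (use a lam in \<open>auto simp: M_def\<close>)
qed

lemma tower_subfields:
  fixes Ks :: "nat \<Rightarrow> 'a set"
  assumes K: "subfield K R" and K0: "Ks 0 = K"
    and steps: "\<forall>i\<in>{1..m}. lam i \<in> carrier R \<and> Ks i = generate_field R (insert (lam i) (Ks (i - 1)))"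
  shows "i \<le> m \<Longrightarrow> subfield (Ks i) R \<and> K \<subseteq> Ks i"
proof (induction i)
  case 0
  then show ?case using K K0 by simp
next
  case (Suc i)
  then have step: "lam (Suc i) \<in> carrier R" "Ks (Suc i) = generate_field R (insert (lam (Suc i)) (Ks i))"
    using steps by auto
  have IH: "subfield (Ks i) R" "K \<subseteq> Ks i" using Suc by auto
  have "insert (lam (Suc i)) (Ks i) \<subseteq> carrier R" using step(1) subfieldE(3)[OF IH(1)] by auto
  then have "subfield (Ks (Suc i)) R" using step(2) generate_field_is_subfield by simp
  moreover have "Ks i \<subseteq> Ks (Suc i)" using step(2) by (auto intro: generate_field.incl)
  ultimately show ?case using IH by auto
qed

end

context algebraically_closed
begin

lemma radical_tower_step:
  fixes n :: nat
  assumes k: "subfield k L" and F: "subfield F L" "k \<subseteq> F" and a: "a \<in> F" and lam: "lam \<in> carrier L"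
    and eq: "(n \<ge> 1 \<and> lam [^] n \<ominus> a = \<zero>) \<or> (n \<ge> 2 \<and> lam [^] n \<ominus> lam \<ominus> a = \<zero>)"
  shows "fin_ext L F (generate_field L (insert lam F)) \<and> ed L k F (generate_field L (insert lam F)) \<le> 1"
proof -
  have ka: "insert a k \<subseteq> carrier L" using a subfieldE(3)[OF F(1)] subfieldE(3)[OF k] by auto
  have lam_ka: "(algebraic over (generate_field L (insert a k))) lam"
    using algebraic_if_radical_or_artin_schreier[OF subfieldE(1)[OF generate_field_is_subfield[OF ka]] _ lam eq]
    by (auto intro: generate_field.incl)
  have "generate_field L (insert a k) \<subseteq> F"
    using generate_field_min_subfield1[OF ka F(1)] a F(2) by auto
  then have "(algebraic over F) lam" using algebraic_mono lam_ka by blast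
  then show ?thesis
    using fin_ext_generate_field_insert[OF F(1) lam] ed_generate_field_insert_le_1[OF k F a lam lam_ka] by simp
qed

lemma solvable_ext_lev_le_1:
  assumes K: "subfield K L" and k: "subfield k L" "k \<subseteq> K" and M: "solvable_ext L K M"
  shows "lev L k K M \<le> 1"
proof -
  obtain m :: nat and Ks :: "nat \<Rightarrow> 'a set" and lam a :: "nat \<Rightarrow> 'a" and n :: "nat \<Rightarrow> nat"
    where K0: "Ks 0 = K"
      and steps: "\<forall>i\<in>{1..m}. lam i \<in> carrier L \<and> a i \<in> Ks (i - 1) \<and>
         Ks i = generate_field L (insert (lam i) (Ks (i - 1))) \<and>
         ((n i \<ge> 1 \<and> lam i [^] n i \<ominus> a i = \<zero>) \<or> (n i \<ge> 2 \<and> lam i [^] n i \<ominus> lam i \<ominus> a i = \<zero>))"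
      and emb: "embeds_over L K M (Ks m)"
    using M unfolding solvable_ext_def by blast
  have "fin_ext L (Ks (i - 1)) (Ks i) \<and> ed L k (Ks (i - 1)) (Ks i) \<le> enat 1" if i: "i \<in> {1..m}" for i
  proof -
    have "subfield (Ks (i - 1)) L \<and> K \<subseteq> Ks (i - 1)"
      by (rule tower_subfields[where Ks=Ks and m=m and lam=lam, OF K K0]) (use steps i in auto)
    then show ?thesis
      using radical_tower_step[OF k(1) _ _ _ _, of "Ks (i - 1)" "a i" "lam i" "n i"] steps i k(2)
      by (auto simp: one_enat_def)
  qed
  then show ?thesis
    unfolding lev_def using K0 emb
    by (intro Inf_lower) (auto simp: one_enat_def intro!: exI[of _ 1] exI[of _ m] exI[of _ Ks])
qed

lemma closed_at_level_imp_solvably_closed: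
  assumes K: "subfield K L" and k: "subfield k L" "k \<subseteq> K" and d: "d \<ge> 1"
    and closed: "closed_at_level L k K d"
  shows "solvably_closed L K"
  unfolding solvably_closed_def
proof (intro allI impI)
  fix M assume M: "fin_ext L K M \<and> solvable_ext L K M"
  then have "lev L k K M \<le> enat d"
    using solvable_ext_lev_le_1[OF K k] d order.trans[of _ 1 "enat d"] by (auto simp: one_enat_def)
  then have "M \<subseteq> level_closure L k K d"
    unfolding level_closure_def using M by (auto intro: generate_field.incl)
  then show "M = K" using M closed unfolding closed_at_level_def fin_ext_def by auto
qed

lemma exists_root_of_radical:
  fixes n :: nat
  assumes "n \<ge> 1" "x \<in> carrier L"
  shows "\<exists>y\<in>carrier L. y [^] n \<ominus> x = \<zero>"
proof -
  have P: "radical_poly n x \<in> carrier (poly_ring L)"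
    using radical_poly_carrier[OF carrier_is_subring assms(2)] .
  have "size (roots (radical_poly n x)) = n"
    using roots_over_carrier[OF P] assms(1) unfolding splitted_def by (simp add: radical_poly_def)
  then obtain y where "y \<in># roots (radical_poly n x)"
    using assms(1) by (metis size_empty not_one_le_zero multiset_nonemptyE)
  then have "y \<in> carrier L" "eval (radical_poly n x) y = \<zero>"
    using roots_mem_iff_is_root[OF P] unfolding is_root_def by auto
  then show ?thesis using eval_radical_poly[OF assms] by auto
qed

lemma solvably_closed_imp_perfect:
  assumes K: "subfield K L" and closed: "solvably_closed L K"
  shows "perfect L K"
  unfolding perfect_def
proof (intro allI impI ballI)
  fix p :: nat and x assume p: "Factorial_Ring.prime p \<and> add_pow L p \<one> = \<zero>" and x: "x \<in> K"
  have p1: "p \<ge> 1" using p prime_gt_0_nat by (auto simp: Suc_le_eq)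
  have xc: "x \<in> carrier L" using x subfieldE(3)[OF K] by auto
  obtain y where y: "y \<in> carrier L" "y [^] p \<ominus> x = \<zero>" using exists_root_of_radical[OF p1 xc] by blast
  have "(algebraic over K) y"
    using algebraic_if_radical_or_artin_schreier[OF subfieldE(1)[OF K] x y(1)] p1 y(2) by blast
  then have "generate_field L (insert y K) = K"
    using closed fin_ext_generate_field_insert[OF K y(1)] solvable_ext_radical[OF K x y(1) p1 y(2)]
    unfolding solvably_closed_def by blast
  then have "y \<in> K" by (auto intro: generate_field.incl)
  moreover have "y [^] p = x" using y xc by (metis r_right_minus_eq nat_pow_closed)
  ultimately show "\<exists>y\<in>K. y [^] p = x" by blast
qed

end

theorem corollary6p5:
  fixes \<Omega> :: "('a, 'b) ring_scheme" and k K :: "'a set" and d :: nat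
  assumes "algebraic_closure \<Omega> K"
    and "subfield k \<Omega>" and "k \<subseteq> K"
    and "d \<ge> 1"
    and "closed_at_level \<Omega> k K d"
  shows "perfect \<Omega> K \<and> solvably_closed \<Omega> K"
proof -
  interpret algebraic_closure \<Omega> K by (rule assms(1))
  have "solvably_closed \<Omega> K"
    using closed_at_level_imp_solvably_closed[OF subfield_axioms assms(2-5)] .
  then show ?thesis using solvably_closed_imp_perfect[OF subfield_axioms] by simp
qed

end
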